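(* The outer length billiard map $T$ and its square $T^2$ are positive twist maps of the phase cylinder in the coordinates $(\alpha,R)$. That is, if $(\alpha',R')=T(\alpha,R)$ and $(\alpha'',R'')=T^2(\alpha,R)$, then $\partial\alpha'/\partial R>0$ and $\partial\alpha''/\partial R>0$ everywhere.
   Context: Let $\gamma$ be an oval: a smooth closed curve in $\mathbb R^2$ with everywhere positive curvature, oriented counterclockwise. Its support function is a smooth $2\pi$-periodic $p$ with $p+p''>0$. $L(\alpha)=\{x\cos\alpha+y\sin\alpha=p(\alpha)\}$ is the tangent line with outer normal $(\cos\alpha,\sin\alpha)$, touching $\gamma$ at $\gamma(\alpha)=p(\alpha)(\cos\alpha,\sin\alpha)+p'(\alpha)(-\sin\alpha,\cos\alpha)$. Every exterior point is $M=L(\alpha_1)\cap L(\alpha_2)$ with $\alpha_1<\alpha_2<\alpha_1+\pi$. Set $\omega=\alpha_2-\alpha_1$, $l_j=|M-\gamma(\alpha_j)|$ and $R_j=l_j\tan(\omega/2)$. Here $R_j$ is the radius of the circle tangent to $L(\alpha_j)$ at $\gamma(\alpha_j)$, tangent to the other line, and lying on the side of $L(\alpha_j)$ not containing $\gamma$. The outer length billiard map is $T(M)=L(\alpha_2)\cap L(\alpha_3)$, where $\alpha_3\in(\alpha_2,\alpha_2+\pi)$ is defined as follows. Let $K$ be the circle tangent to $L(\alpha_2)$ at $\gamma(\alpha_2)$, on the side of $L(\alpha_2)$ not containing $\gamma$, and tangent to $L(\alpha_1)$. Then $L(\alpha_3)$ is the common tangent line of $\gamma$ and $K$, other than $L(\alpha_1)$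 and $L(\alpha_2)$, leaving $\gamma$ and $K$ on the same side. Equivalently, the radius $R_1$ of $T(M)$ equals the radius $R_2$ of $M$. Phase coordinates: $M\mapsto(\alpha,R):=(\alpha_1,R_1)$. *)

theory Defs
  imports "HOL-Analysis.Analysis"
begin

definition is_oval_support :: "(real \<Rightarrow> real) \<Rightarrow> bool" where
  "is_oval_support p \<longleftrightarrow>
     (\<forall>n x. ((deriv ^^ n) p) differentiable (at x)) \<and>
     (\<forall>x. p (x + 2 * pi) = p x) \<and>
     (\<forall>x. p x + deriv (deriv p) x > 0)"

definition tline :: "(real \<Rightarrow> real) \<Rightarrow> real \<Rightarrow> (real \<times> real) set" where
  "tline p a = {(x, y). x * cos a + y * sin a = p a}"

text \<open>Tangency point gamma(a).\<close>
definition gam :: "(real \<Rightarrow> real) \<Rightarrow> real \<Rightarrow> real \<times> real" where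
  "gam p a = (p a * cos a - deriv p a * sin a, p a * sin a + deriv p a * cos a)"

definition extpt :: "(real \<Rightarrow> real) \<Rightarrow> real \<Rightarrow> real \<Rightarrow> real \<times> real" where
  "extpt p a1 a2 = (THE M. M \<in> tline p a1 \<and> M \<in> tline p a2)"

definition rad1 :: "(real \<Rightarrow> real) \<Rightarrow> real \<Rightarrow> real \<Rightarrow> real" where
  "rad1 p a1 a2 = dist (extpt p a1 a2) (gam p a1) * tan ((a2 - a1) / 2)"

definition rad2 :: "(real \<Rightarrow> real) \<Rightarrow> real \<Rightarrow> real \<Rightarrow> real" where
  "rad2 p a1 a2 = dist (extpt p a1 a2) (gam p a2) * tan ((a2 - a1) / 2)"

definition second_angle :: "(real \<Rightarrow> real) \<Rightarrow> real \<Rightarrow> real \<Rightarrow> real" where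
  "second_angle p a R = (THE a2. a < a2 \<and> a2 < a + pi \<and> rad1 p a a2 = R)"

text \<open>Outer length billiard map in phase coordinates (alpha, R) = (alpha_1, R_1):
  M = L(a1) \<inter> L(a2) is sent to L(a2) \<inter> L(a3), whose R_1 equals R_2 of M.
  Hence T(a, R) = (a2, R_2(a, a2)).\<close>
definition olb_map :: "(real \<Rightarrow> real) \<Rightarrow> real \<times> real \<Rightarrow> real \<times> real" where
  "olb_map p z = (let a = fst z; a2 = second_angle p a (snd z) in (a2, rad2 p a a2))"

end

theory Submission
  imports Defs
begin

(*
  Let d(x, y) be the distance from gamma(x) to the tangent line L(y). For x < y < x + pi the radii
  of L(x) \<inter> L(y) are R_1 = r(x, y) and R_2 = r(y, x), where r(x, y) = d(x, y) / (1 + cos (y - x));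
  so T(alpha, R) = (alpha', r(alpha', alpha)), where alpha' solves r(alpha, alpha') = R.
  Since p + p'' > 0, a Sturm comparison with sin shows d(x, y) > 0 for 0 < |y - x| <= pi; from this
  one reads off that r(x, y) increases in y and that its partial derivative in x has the sign of
  x - y. Implicit differentiation then gives
    d alpha' / dR  = 1 / r_y(alpha, alpha') > 0,
    d alpha'' / dR = (r_x(alpha', alpha) - r_x(alpha', alpha''))
                     / (r_y(alpha, alpha') r_y(alpha', alpha'')) > 0.
*)

lemma is_oval_supportD:
  assumes "is_oval_support p"
  shows "(p has_real_derivative deriv p x) (at x)"
    and "(deriv p has_real_derivative deriv (deriv p) x) (at x)"
    and "p x + deriv (deriv p) x > 0"
proof -
  have "((deriv ^^ 0) p) differentiable (at x)" "((deriv ^^ 1) p) differentiable (at x)"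
    using assms unfolding is_oval_support_def by blast+
  then show "(p has_real_derivative deriv p x) (at x)"
    and "(deriv p has_real_derivative deriv (deriv p) x) (at x)"
    by (simp_all add: DERIV_deriv_iff_real_differentiable)
  show "p x + deriv (deriv p) x > 0"
    using assms unfolding is_oval_support_def by blast
qed

lemma sturm_comparison_pos:
  fixes F F' F'' :: "real \<Rightarrow> real"
  assumes "0 < w" "w \<le> pi"
    and F': "\<And>s. (F has_real_derivative F' s) (at s)"
    and F'': "\<And>s. (F' has_real_derivative F'' s) (at s)"
    and "F 0 = 0" "F' 0 = 0"
    and pos: "\<And>s. F'' s + F s > 0"
  shows "F w > 0"
proof -
  \<comment> \<open>W is increasing, W 0 = 0 and W w = F w\<close>
  define W where "W s = F' s * sin (w - s) + F s * cos (w - s)" for s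
  have W': "(W has_real_derivative (F'' s + F s) * sin (w - s)) (at s)" for s
    unfolding W_def
    by (rule derivative_eq_intros F' F'' refl | simp)+ (simp add: algebra_simps)
  have "W 0 < W w"
  proof (rule DERIV_pos_imp_increasing_open[OF \<open>0 < w\<close>])
    fix s assume "0 < s" "s < w"
    then have "sin (w - s) > 0"
      using \<open>w \<le> pi\<close> by (simp add: sin_gt_zero)
    then show "\<exists>y. (W has_real_derivative y) (at s) \<and> 0 < y"
      using W' pos by (meson mult_pos_pos)
  next
    show "continuous_on {0..w} W"
      using W' by (meson DERIV_atLeastAtMost_imp_continuous_on)
  qed
  then show ?thesis
    unfolding W_def using \<open>F 0 = 0\<close> \<open>F' 0 = 0\<close> by simp
qed

text \<open>The distance from \<gamma>(x) to the tangent line L(y).\<close>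

definition tangent_gap :: "(real \<Rightarrow> real) \<Rightarrow> real \<Rightarrow> real \<Rightarrow> real" where
  "tangent_gap p x y = p y - p x * cos (y - x) - deriv p x * sin (y - x)"

lemma tangent_gap_pos:
  assumes "is_oval_support p" "y \<noteq> x" "\<bar>y - x\<bar> \<le> pi"
  shows "tangent_gap p x y > 0"
proof -
  note oval = is_oval_supportD[OF assms(1)]
  define \<sigma> where "\<sigma> = sgn (y - x)"
  have \<sigma>: "\<sigma> * \<sigma> = 1" "y = x + \<sigma> * \<bar>y - x\<bar>"
    using assms(2) by (auto simp: \<sigma>_def sgn_if)
  define F where "F s = tangent_gap p x (x + \<sigma> * s)" for s
  define F' where
    "F' s = \<sigma> * (deriv p (x + \<sigma> * s) + p x * sin (\<sigma> * s) - deriv p x * cos (\<sigma> * s))" for s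
  define F'' where
    "F'' s = \<sigma> * \<sigma> * (deriv (deriv p) (x + \<sigma> * s) + p x * cos (\<sigma> * s) + deriv p x * sin (\<sigma> * s))"
    for s
  have "F \<bar>y - x\<bar> > 0"
  proof (rule sturm_comparison_pos[where F = F and F' = F' and F'' = F''])
    show "(F has_real_derivative F' s) (at s)" for s
      unfolding F_def F'_def tangent_gap_def
      by (rule derivative_eq_intros oval(1)[THEN DERIV_chain2] refl | simp)+ (simp add: algebra_simps)
    show "(F' has_real_derivative F'' s) (at s)" for s
      unfolding F'_def F''_def
      by (rule derivative_eq_intros oval(2)[THEN DERIV_chain2] refl | simp)+ (simp add: algebra_simps)
    show "F'' s + F s > 0" for s
      using oval(3)[of "x + \<sigma> * s"] by (simp add: F_def F''_def tangent_gap_def \<sigma>(1))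
  qed (use assms in \<open>auto simp: F_def F'_def tangent_gap_def\<close>)
  then show ?thesis
    using \<sigma>(2) by (simp add: F_def)
qed

lemma extpt_commute: "extpt p x y = extpt p y x"
  unfolding extpt_def by (simp add: conj_commute)

lemma extpt_closed_form:
  assumes "sin (y - x) \<noteq> 0"
  shows "extpt p x y =
    ((p x * sin y - p y * sin x) / sin (y - x), (p y * cos x - p x * cos y) / sin (y - x))"
  unfolding extpt_def
proof (rule the_equality)
  have sin_yx: "sin (y - x) = sin y * cos x - cos y * sin x"
    by (simp add: sin_diff)
  show "((p x * sin y - p y * sin x) / sin (y - x), (p y * cos x - p x * cos y) / sin (y - x))
      \<in> tline p x \<and>
    ((p x * sin y - p y * sin x) / sin (y - x), (p y * cos x - p x * cos y) / sin (y - x))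
      \<in> tline p y"
    using assms unfolding tline_def by (auto simp: field_simps sin_yx)
next
  fix M assume "M \<in> tline p x \<and> M \<in> tline p y"
  then obtain u v where M: "M = (u, v)"
    and x: "u * cos x + v * sin x = p x" and y: "u * cos y + v * sin y = p y"
    unfolding tline_def by auto
  have "u * sin (y - x) = p x * sin y - p y * sin x" "v * sin (y - x) = p y * cos x - p x * cos y"
    by (simp_all add: sin_diff x[symmetric] y[symmetric] algebra_simps)
  then show "M = ((p x * sin y - p y * sin x) / sin (y - x), (p y * cos x - p x * cos y) / sin (y - x))"
    using M assms by (simp add: field_simps)
qed

lemma dist_extpt_gam:
  assumes "sin (y - x) \<noteq> 0"
  shows "dist (extpt p x y) (gam p x) = \<bar>tangent_gap p x y / sin (y - x)\<bar>"
proof -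
  define w where "w = y - x"
  define d where "d = tangent_gap p x y / sin w"
  have y: "sin y = sin x * cos w + cos x * sin w" "cos y = cos x * cos w - sin x * sin w"
    by (simp_all add: w_def flip: sin_add cos_add)
  have "(p x * sin y - p y * sin x) - (p x * cos x - deriv p x * sin x) * sin w
      = - (d * sin w) * sin x"
    "(p y * cos x - p x * cos y) - (p x * sin x + deriv p x * cos x) * sin w
      = (d * sin w) * cos x"
    using assms by (simp_all add: d_def tangent_gap_def y flip: w_def) (simp_all add: algebra_simps)
  then have "extpt p x y = gam p x + d *\<^sub>R (- sin x, cos x)"
    using assms unfolding extpt_closed_form[OF assms] gam_def
    by (simp add: w_def field_simps)
  then have "dist (extpt p x y) (gam p x) = \<bar>d\<bar> * norm (- sin x, cos x)"
    by (simp only: dist_norm add_diff_cancel_left' norm_scaleR)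
  moreover have "norm (- sin x, cos x) = 1"
    by (simp add: norm_Pair)
  ultimately show ?thesis
    by (simp add: d_def w_def)
qed

definition radius :: "(real \<Rightarrow> real) \<Rightarrow> real \<Rightarrow> real \<Rightarrow> real" where
  "radius p x y = tangent_gap p x y / (1 + cos (y - x))"

lemma one_plus_cos_pos: "\<bar>t\<bar> < pi \<Longrightarrow> 1 + cos t > 0"
  using cos_gt_neg1[of t] by (simp add: abs_less_iff)

lemma radius_pos:
  assumes "is_oval_support p" "y \<noteq> x" "\<bar>y - x\<bar> < pi"
  shows "radius p x y > 0"
  using tangent_gap_pos[OF assms(1,2)] one_plus_cos_pos[OF assms(3)] assms(3)
  by (simp add: radius_def)

lemma rad_eq_radius:
  assumes "is_oval_support p" "x < y" "y < x + pi"
  shows "rad1 p x y = radius p x y" and "rad2 p x y = radius p y x"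
proof -
  have sin: "sin (y - x) > 0"
    using assms by (simp add: sin_gt_zero)
  have "2 * ((y - x) / 2) = y - x"
    by simp
  then have tan: "tan ((y - x) / 2) = sin (y - x) / (1 + cos (y - x))"
    using tan_half[of "(y - x) / 2"] by (simp only: add.commute)
  have gap: "tangent_gap p x y > 0" "tangent_gap p y x > 0"
    using tangent_gap_pos[OF assms(1)] assms by auto
  have "cos (x - y) = cos (y - x)"
    by (metis cos_minus minus_diff_eq)
  moreover have "sin (x - y) = - sin (y - x)"
    by (metis sin_minus minus_diff_eq)
  ultimately show "rad1 p x y = radius p x y" "rad2 p x y = radius p y x"
    unfolding rad1_def rad2_def radius_def tan
    using dist_extpt_gam[of y x p] dist_extpt_gam[of x y p] extpt_commute[of p x y] sin gap
    by auto
qed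

definition radius_dx :: "(real \<Rightarrow> real) \<Rightarrow> real \<Rightarrow> real \<Rightarrow> real" where
  "radius_dx p x y = - sin (y - x) *
    ((p x + deriv (deriv p) x) * (1 + cos (y - x)) + tangent_gap p x y) / (1 + cos (y - x))\<^sup>2"

definition radius_dy :: "(real \<Rightarrow> real) \<Rightarrow> real \<Rightarrow> real \<Rightarrow> real" where
  "radius_dy p x y = ((deriv p y + p x * sin (y - x) - deriv p x * cos (y - x)) * (1 + cos (y - x))
    + tangent_gap p x y * sin (y - x)) / (1 + cos (y - x))\<^sup>2"

lemma has_derivative_radius:
  assumes "is_oval_support p" "1 + cos (y - x) \<noteq> 0"
  shows "((\<lambda>z. radius p (fst z) (snd z)) has_derivative
    (\<lambda>h. fst h * radius_dx p x y + snd h * radius_dy p x y)) (at (x, y))"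
proof -
  note oval = is_oval_supportD[OF assms(1)]
  show ?thesis
    unfolding radius_def tangent_gap_def
    apply (rule has_derivative_eq_rhs)
     apply (rule derivative_eq_intros oval(1)[THEN DERIV_compose_FDERIV] oval(2)[THEN DERIV_compose_FDERIV]
        DERIV_cos[THEN DERIV_compose_FDERIV] DERIV_sin[THEN DERIV_compose_FDERIV] | simp add: assms)+
    using assms(2)
    apply (simp add: fun_eq_iff radius_dx_def radius_dy_def tangent_gap_def divide_simps)
    apply (simp add: algebra_simps power2_eq_square)
    done
qed

lemma radius_has_real_derivative:
  assumes "is_oval_support p" "1 + cos (y - x) \<noteq> 0"
  shows "((\<lambda>x. radius p x y) has_real_derivative radius_dx p x y) (at x)"
    and "(radius p x has_real_derivative radius_dy p x y) (at y)"
proof -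
  have "((\<lambda>t. radius p (fst (t, y)) (snd (t, y))) has_derivative
      (\<lambda>k. fst (k, 0::real) * radius_dx p x y + snd (k, 0::real) * radius_dy p x y)) (at x)"
    by (rule has_derivative_compose[where f = "\<lambda>t. (t, y)", OF _ has_derivative_radius[OF assms]])
       (rule derivative_eq_intros | simp)+
  then show "((\<lambda>x. radius p x y) has_real_derivative radius_dx p x y) (at x)"
    by (simp add: has_field_derivative_def mult_commute_abs)
  have "((\<lambda>t. radius p (fst (x, t)) (snd (x, t))) has_derivative
      (\<lambda>k. fst (0::real, k) * radius_dx p x y + snd (0::real, k) * radius_dy p x y)) (at y)"
    by (rule has_derivative_compose[where f = "\<lambda>t. (x, t)", OF _ has_derivative_radius[OF assms]])
       (rule derivative_eq_intros | simp)+
  then show "(radius p x has_real_derivative radius_dy p x y) (at y)"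
    by (simp add: has_field_derivative_def mult_commute_abs)
qed

lemma radius_dy_pos:
  assumes "is_oval_support p" "x < y" "y < x + pi"
  shows "radius_dy p x y > 0"
proof -
  define c where "c = cos (y - x)"
  define s where "s = sin (y - x)"
  have "s > 0" "1 + c > 0"
    using assms one_plus_cos_pos[of "y - x"] by (simp_all add: s_def c_def sin_gt_zero)
  have "cos (x - y) = c" "sin (x - y) = - s"
    by (simp_all add: c_def s_def cos_diff sin_diff)
  then have "s * ((deriv p y + p x * s - deriv p x * c) * (1 + c) + tangent_gap p x y * s)
      - (tangent_gap p x y + tangent_gap p y x) * (1 + c)
      = (s\<^sup>2 + c\<^sup>2 - 1) * (p x + p y - deriv p x * s)"
    by (simp add: tangent_gap_def flip: c_def s_def) (simp add: algebra_simps power2_eq_square)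
  moreover have "s\<^sup>2 + c\<^sup>2 = 1"
    by (simp add: s_def c_def)
  moreover have "tangent_gap p x y + tangent_gap p y x > 0"
    using tangent_gap_pos[OF assms(1)] assms by (simp add: add_pos_pos)
  ultimately have "s * ((deriv p y + p x * s - deriv p x * c) * (1 + c) + tangent_gap p x y * s) > 0"
    using \<open>1 + c > 0\<close> by simp
  then show ?thesis
    using \<open>s > 0\<close> \<open>1 + c > 0\<close>
    by (simp add: radius_dy_def zero_less_mult_iff flip: c_def s_def)
qed

lemma radius_dx_sign:
  assumes "is_oval_support p" "y \<noteq> x" "\<bar>y - x\<bar> < pi"
  shows "x < y \<Longrightarrow> radius_dx p x y < 0" and "y < x \<Longrightarrow> radius_dx p x y > 0"
proof -
  have cos: "1 + cos (y - x) > 0"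
    using one_plus_cos_pos assms(3) .
  moreover have "tangent_gap p x y > 0" "p x + deriv (deriv p) x > 0"
    using tangent_gap_pos is_oval_supportD(3) assms by auto
  ultimately have "(p x + deriv (deriv p) x) * (1 + cos (y - x)) + tangent_gap p x y > 0"
    by (simp add: add_pos_pos)
  moreover have "x < y \<Longrightarrow> sin (y - x) > 0" "y < x \<Longrightarrow> sin (x - y) > 0"
    using assms(3) by (simp_all add: sin_gt_zero)
  moreover have "sin (y - x) = - sin (x - y)"
    by (metis minus_diff_eq sin_minus)
  ultimately show "x < y \<Longrightarrow> radius_dx p x y < 0" "y < x \<Longrightarrow> radius_dx p x y > 0"
    unfolding radius_dx_def using cos
    by (auto simp: zero_less_divide_iff divide_less_0_iff zero_less_mult_iff mult_less_0_iff)
qed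

lemma radius_strict_mono_on:
  assumes "is_oval_support p"
  shows "strict_mono_on {x<..<x + pi} (radius p x)"
proof (rule strict_mono_onI)
  fix y1 y2 assume "y1 \<in> {x<..<x + pi}" "y2 \<in> {x<..<x + pi}" "y1 < y2"
  then show "radius p x y1 < radius p x y2"
  proof (intro DERIV_pos_imp_increasing[OF \<open>y1 < y2\<close>])
    fix t assume "y1 \<le> t" "t \<le> y2"
    with \<open>y1 \<in> _\<close> \<open>y2 \<in> _\<close> have "x < t" "t < x + pi"
      by auto
    then show "\<exists>d. (radius p x has_real_derivative d) (at t) \<and> 0 < d"
      using radius_has_real_derivative(2)[OF assms] radius_dy_pos[OF assms] one_plus_cos_pos[of "t - x"]
      by force
  qed
qed

lemma radius_tendsto_at_top:
  assumes "is_oval_support p"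
  shows "filterlim (radius p x) at_top (at_left (x + pi))"
proof -
  note oval = is_oval_supportD[OF assms]
  have "isCont (tangent_gap p x) (x + pi)"
    unfolding tangent_gap_def using oval(1,2)[THEN DERIV_isCont]
    by (intro continuous_intros) auto
  then have gap: "(tangent_gap p x \<longlongrightarrow> tangent_gap p x (x + pi)) (at_left (x + pi))"
    by (simp add: isCont_def filterlim_at_split)
  have "isCont (\<lambda>y. 1 + cos (y - x)) (x + pi)"
    by (intro continuous_intros)
  then have cos: "((\<lambda>y. 1 + cos (y - x)) \<longlongrightarrow> 0) (at_left (x + pi))"
    by (simp add: isCont_def filterlim_at_split)
  have "eventually (\<lambda>y. y \<in> {x<..<x + pi}) (at_left (x + pi))"
    by (rule eventually_at_left_real) simp
  then have "eventually (\<lambda>y. 0 < 1 + cos (y - x)) (at_left (x + pi))"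
    by eventually_elim (simp add: one_plus_cos_pos)
  then show ?thesis
    unfolding radius_def using tangent_gap_pos[OF assms, of "x + pi" x]
    by (intro LIM_at_top_divide[OF gap _ cos]) auto
qed

lemma ex_radius_eq:
  assumes "is_oval_support p" "r > 0"
  shows "\<exists>y\<in>{x<..<x + pi}. radius p x y = r"
proof -
  have "eventually (\<lambda>y. r < radius p x y) (at_left (x + pi))"
    using radius_tendsto_at_top[OF assms(1), of x] by (simp add: filterlim_at_top_dense)
  then have "eventually (\<lambda>y. y \<in> {x<..<x + pi} \<and> r < radius p x y) (at_left (x + pi))"
    by (intro eventually_conj eventually_at_left_real) simp_all
  then obtain y1 where y1: "y1 \<in> {x<..<x + pi}" "r < radius p x y1"
    using eventually_happens'[OF trivial_limit_at_left_real] by blast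
  have "continuous_on {x..y1} (radius p x)"
  proof (rule DERIV_atLeastAtMost_imp_continuous_on)
    fix t assume "x \<le> t" "t \<le> y1"
    then have "1 + cos (t - x) \<noteq> 0"
      using one_plus_cos_pos[of "t - x"] y1 by force
    then show "\<exists>d. (radius p x has_real_derivative d) (at t)"
      using radius_has_real_derivative(2)[OF assms(1)] by blast
  qed
  moreover have "radius p x x = 0"
    by (simp add: radius_def tangent_gap_def)
  ultimately obtain y where "x \<le> y" "y \<le> y1" "radius p x y = r"
    using IVT'[of "radius p x" x r y1] y1 assms(2) by auto
  moreover have "y \<noteq> x"
    using \<open>radius p x x = 0\<close> \<open>radius p x y = r\<close> assms(2) by auto
  ultimately show ?thesis
    using y1 by auto
qed

lemma second_angle_radius:
  assumes "is_oval_support p" "y \<in> {x<..<x + pi}"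
  shows "second_angle p x (radius p x y) = y"
  unfolding second_angle_def
proof (rule the_equality)
  show "x < y \<and> y < x + pi \<and> rad1 p x y = radius p x y"
    using assms rad_eq_radius(1) by auto
next
  fix z assume "x < z \<and> z < x + pi \<and> rad1 p x z = radius p x y"
  then have "z \<in> {x<..<x + pi}" "radius p x z = radius p x y"
    using rad_eq_radius(1)[OF assms(1)] by auto
  moreover have "inj_on (radius p x) {x<..<x + pi}"
    using strict_mono_on_imp_inj_on radius_strict_mono_on assms(1) by blast
  ultimately show "z = y"
    using assms(2) by (auto dest: inj_onD)
qed

lemma second_angle_spec:
  assumes "is_oval_support p" "r > 0"
  shows "second_angle p x r \<in> {x<..<x + pi}" and "radius p x (second_angle p x r) = r"
  using ex_radius_eq[OF assms, of x] second_angle_radius[OF assms(1)] by auto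

lemma second_angle_has_derivative:
  fixes x r :: real
  assumes "is_oval_support p" "r > 0"
  defines "y \<equiv> second_angle p x r"
  shows "((\<lambda>z. second_angle p (fst z) (snd z)) has_derivative
    (\<lambda>h. (snd h - fst h * radius_dx p x y) / radius_dy p x y)) (at (x, r))"
proof -
  define S where "S = {z :: real \<times> real. fst z < snd z \<and> snd z < fst z + pi}"
  define F where "F z = (fst z, radius p (fst z) (snd z))" for z :: "real \<times> real"
  define G where "G w = (fst w, second_angle p (fst w) (snd w))" for w :: "real \<times> real"
  have "open S"
    unfolding S_def by (intro open_Collect_conj open_Collect_less continuous_intros)
  have y: "(x, y) \<in> S" "F (x, y) = (x, r)"
    using second_angle_spec[OF assms(1,2)] by (auto simp: S_def F_def y_def)
  have F': "(F has_derivative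
      (\<lambda>h. (fst h, fst h * radius_dx p (fst z) (snd z) + snd h * radius_dy p (fst z) (snd z)))) (at z)"
    if "z \<in> S" for z
  proof -
    have "1 + cos (snd z - fst z) \<noteq> 0"
      using that one_plus_cos_pos[of "snd z - fst z"] by (force simp: S_def)
    then show ?thesis
      unfolding F_def using has_derivative_radius[OF assms(1), of "snd z" "fst z"]
      by (intro has_derivative_Pair has_derivative_fst[OF has_derivative_ident]) simp_all
  qed
  have "continuous_on S F"
    using F' has_derivative_continuous by (blast intro: continuous_at_imp_continuous_on)
  moreover have "G (F z) = z" if "z \<in> S" for z
    using that second_angle_radius[OF assms(1)] by (cases z) (simp add: S_def F_def G_def)
  moreover have "radius_dy p x y \<noteq> 0"
    using radius_dy_pos[OF assms(1), of x y] y(1) unfolding S_def by auto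
  ultimately have "(G has_derivative (\<lambda>h. (fst h, (snd h - fst h * radius_dx p x y) / radius_dy p x y)))
      (at (F (x, y)))"
    by (intro has_derivative_inverse_strong[OF \<open>open S\<close> y(1) _ _ F'[OF y(1)]])
       (auto simp: fun_eq_iff field_simps)
  from has_derivative_snd[OF this] show ?thesis
    by (simp add: y(2) G_def)
qed

lemma second_angle_has_real_derivative:
  fixes f g :: "real \<Rightarrow> real"
  assumes "is_oval_support p"
    and "(g has_real_derivative g') (at t)" "(f has_real_derivative f') (at t)" "f t > 0"
  defines "y \<equiv> second_angle p (g t) (f t)"
  shows "((\<lambda>t. second_angle p (g t) (f t)) has_real_derivative
    (f' - g' * radius_dx p (g t) y) / radius_dy p (g t) y) (at t)"
proof -
  have "((\<lambda>t. (g t, f t)) has_derivative (\<lambda>k. (k * g', k * f'))) (at t)"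
    using assms(2,3) unfolding has_field_derivative_def
    by (intro has_derivative_Pair) (simp_all add: mult_commute_abs)
  from has_derivative_compose[OF this second_angle_has_derivative[OF assms(1,4), of "g t"]]
  have "((\<lambda>t. second_angle p (g t) (f t)) has_derivative
      (\<lambda>k. (k * f' - k * g' * radius_dx p (g t) y) / radius_dy p (g t) y)) (at t)"
    by (simp add: y_def)
  then show ?thesis
    unfolding has_field_derivative_def
    by (rule has_derivative_eq_rhs) (simp add: fun_eq_iff diff_divide_distrib algebra_simps)
qed

lemma fst_olb_map: "fst (olb_map p (a, r)) = second_angle p a r"
  by (simp add: olb_map_def Let_def)

lemma fst_olb_map_olb_map:
  fixes a r :: real
  assumes "is_oval_support p" "r > 0"
  defines "x \<equiv> second_angle p a r"
  shows "fst (olb_map p (olb_map p (a, r))) = second_angle p x (radius p x a)"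
  using rad_eq_radius(2)[OF assms(1)] second_angle_spec(1)[OF assms(1,2), of a]
  by (simp add: olb_map_def Let_def x_def)

lemma second_angle_twice_has_real_derivative:
  fixes a R :: real
  assumes "is_oval_support p" "R > 0"
  defines "x \<equiv> second_angle p a R"
  defines "y \<equiv> second_angle p x (radius p x a)"
  shows "((\<lambda>r. second_angle p (second_angle p a r) (radius p (second_angle p a r) a))
    has_real_derivative (radius_dx p x a - radius_dx p x y) / radius_dy p a x / radius_dy p x y) (at R)"
proof -
  have "x \<in> {a<..<a + pi}"
    using second_angle_spec(1)[OF assms(1,2)] by (simp add: x_def)
  then have radius_xa: "radius p x a > 0" "1 + cos (a - x) \<noteq> 0"
    using radius_pos[OF assms(1)] one_plus_cos_pos[of "a - x"] by auto
  have deriv_T: "(second_angle p a has_real_derivative 1 / radius_dy p a x) (at R)"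
    using second_angle_has_real_derivative[OF assms(1) DERIV_const DERIV_ident assms(2)]
    by (simp add: x_def)
  have "((\<lambda>x. radius p x a) has_real_derivative radius_dx p x a) (at (second_angle p a R))"
    using radius_has_real_derivative(1)[OF assms(1) radius_xa(2)] by (simp add: x_def)
  from second_angle_has_real_derivative[OF assms(1) deriv_T DERIV_chain2[OF this deriv_T]
      radius_xa(1)[unfolded x_def], folded x_def, folded y_def]
  show ?thesis
    by (simp add: diff_divide_distrib)
qed

theorem mainTheorem5:
  fixes p :: "real \<Rightarrow> real"
  assumes "is_oval_support p"
    and "R > 0"
  shows "(\<exists>D>0. ((\<lambda>r. fst (olb_map p (a, r))) has_real_derivative D) (at R)) \<and>
    (\<exists>D>0. ((\<lambda>r. fst (olb_map p (olb_map p (a, r)))) has_real_derivative D) (at R))"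
proof -
  define x where "x = second_angle p a R"
  define y where "y = second_angle p x (radius p x a)"
  have x: "x \<in> {a<..<a + pi}"
    using second_angle_spec(1)[OF assms] by (simp add: x_def)
  then have y: "y \<in> {x<..<x + pi}"
    using second_angle_spec(1)[OF assms(1) radius_pos[OF assms(1)]] by (simp add: y_def)
  have deriv_T: "(second_angle p a has_real_derivative 1 / radius_dy p a x) (at R)"
    using second_angle_has_real_derivative[OF assms(1) DERIV_const DERIV_ident assms(2)]
    by (simp add: x_def)
  have deriv_T2: "((\<lambda>r. fst (olb_map p (olb_map p (a, r)))) has_real_derivative
      (radius_dx p x a - radius_dx p x y) / radius_dy p a x / radius_dy p x y) (at R)"
    using second_angle_twice_has_real_derivative[OF assms, of a, folded x_def, folded y_def]
    by (rule has_field_derivative_transform_within_open[where S = "{0<..}"])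
       (use assms fst_olb_map_olb_map in auto)
  have "radius_dx p x a > 0" "radius_dx p x y < 0" "radius_dy p a x > 0" "radius_dy p x y > 0"
    using radius_dx_sign[OF assms(1)] radius_dy_pos[OF assms(1)] x y by auto
  then have "1 / radius_dy p a x > 0"
    "(radius_dx p x a - radius_dx p x y) / radius_dy p a x / radius_dy p x y > 0"
    by simp_all
  then show ?thesis
    unfolding fst_olb_map using deriv_T deriv_T2 by blast
qed

end
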